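(* There exists an $AP_3$-covering sequence $A$ of nonnegative integers such that $$\limsup_{n\to\infty}\frac{A(n)}{\sqrt n}=\sqrt{15}.$$
   Context: A sequence (set) $A$ of nonnegative integers is called an $AP_k$-covering sequence if there exists an integer $n_0$ such that for every integer $n>n_0$ there exist $a_1,\dots,a_{k-1}\in A$ with $a_1<a_2<\cdots<a_{k-1}<n$ such that $a_1,\dots,a_{k-1},n$ form a $k$-term arithmetic progression. Here $k=3$. $A(n)$ denotes the counting function $A(n)=\#\{a\in A: a\le n\}$. *)

theory Defs
  imports Complex_Main "HOL-Library.Liminf_Limsup" "HOL-Library.Extended_Real"
begin

definition AP3_covering :: "nat set \<Rightarrow> bool" where
  "AP3_covering A \<longleftrightarrow>
     (\<exists>n0. \<forall>n>n0. \<exists>a1\<in>A. \<exists>a2\<in>A. a1 < a2 \<and> a2 < n \<and> a2 - a1 = n - a2)"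

definition counting :: "nat set \<Rightarrow> nat \<Rightarrow> nat" where
  "counting A n = card {a\<in>A. a \<le> n}"

end

theory Submission
  imports Defs "HOL-Real_Asymp.Real_Asymp"
begin

text \<open>Let \<open>U\<close> be the numbers whose base-4 digits are all 0 or 1 and \<open>V\<close> the numbers whose
  base-4 digits are all 1 or 2 (including 0). Reading off the base-4 digits of \<open>n\<close> from the
  right, one finds \<open>v \<in> V\<close> and \<open>u \<in> U\<close> with \<open>u \<le> v\<close> and \<open>2v = n + u\<close>, so \<open>u, v, n\<close> is a
  3-term progression unless \<open>u = v = n\<close>; then \<open>n \<in> U \<inter> V\<close> is a repunit \<open>11\<dots>1\<^sub>4\<close>, and adding
  the two predecessors of every repunit covers these \<open>n\<close> too.
  Up to \<open>x\<close> there are at most \<open>\<surd>(3x) + 1\<close> elements of \<open>U\<close> and at most \<open>\<surd>(15x) + 3\<close> elements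
  of \<open>U \<union> V\<close>, with near equality at \<open>x = 122\<dots>2\<^sub>4\<close>; the repunit predecessors only add
  \<open>O(log x)\<close>.\<close>

text \<open>\<open>spread n\<close> is the binary expansion of \<open>n\<close> read in base 4.\<close>

fun spread :: "nat \<Rightarrow> nat" where
  "spread n = (if n = 0 then 0 else 4 * spread (n div 2) + n mod 2)"

declare spread.simps[simp del]

lemma spread_0 [simp]: "spread 0 = 0"
  by (simp add: spread.simps)

lemma spread_digit: "b < 2 \<Longrightarrow> spread (2 * m + b) = 4 * spread m + b"
  by (subst spread.simps) auto

lemma spread_mult2: "spread (2 * m) = 4 * spread m"
  using spread_digit[of 0 m] by simp

lemma spread_mult2_Suc: "spread (Suc (2 * m)) = Suc (4 * spread m)"
  using spread_digit[of 1 m] by simp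

lemma spread_less_spread_Suc: "spread n < spread (Suc n)"
proof (induction n rule: less_induct)
  case (less n)
  show ?case
  proof (cases "even n")
    case True
    then obtain q where "n = 2 * q" by blast
    then show ?thesis by (simp add: spread_mult2 spread_mult2_Suc)
  next
    case False
    then obtain q where q: "n = Suc (2 * q)" by (metis oddE add.commute plus_1_eq_Suc)
    then have "spread q < spread (Suc q)" using less by simp
    moreover have "spread (Suc n) = 4 * spread (Suc q)"
      using spread_mult2[of "Suc q"] q by simp
    ultimately show ?thesis using q by (simp add: spread_mult2_Suc)
  qed
qed

lemma strict_mono_spread: "strict_mono spread"
  using spread_less_spread_Suc strict_mono_Suc_iff by blast

lemma spread_less_iff [simp]: "spread a < spread b \<longleftrightarrow> a < b"
  using strict_mono_spread strict_mono_less by blast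

lemma spread_le_iff [simp]: "spread a \<le> spread b \<longleftrightarrow> a \<le> b"
  using strict_mono_spread strict_mono_less_eq by blast

lemma inj_spread: "inj spread"
  using strict_mono_spread strict_mono_imp_inj_on by blast

lemma le_spread: "n \<le> spread n"
  using strict_mono_spread strict_mono_imp_increasing by blast

lemma spread_pow2_add: "r < 2 ^ k \<Longrightarrow> spread (2 ^ k + r) = 4 ^ k + spread r"
proof (induction k arbitrary: r)
  case 0
  then show ?case by (simp add: spread_mult2_Suc[of 0, simplified])
next
  case (Suc k)
  define b where "b = r mod 2"
  have r: "r = 2 * (r div 2) + b" "b < 2" unfolding b_def by simp_all
  have "2 ^ Suc k + r = 2 * (2 ^ k + r div 2) + b" using r by simp
  then have "spread (2 ^ Suc k + r) = 4 * spread (2 ^ k + r div 2) + b"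
    using spread_digit[OF r(2)] by metis
  moreover have "spread r = 4 * spread (r div 2) + b"
    using spread_digit[OF r(2)] r(1) by metis
  moreover have "r div 2 < 2 ^ k" using Suc.prems by simp
  ultimately show ?case using Suc.IH by simp
qed

lemma spread_pow2: "spread (2 ^ k) = 4 ^ k"
  using spread_pow2_add[of 0 k] by simp

fun repunit4 :: "nat \<Rightarrow> nat" where
  "repunit4 0 = 0"
| "repunit4 (Suc L) = Suc (4 * repunit4 L)"

lemma three_repunit4: "3 * repunit4 L + 1 = 4 ^ L"
  by (induction L) auto

lemma strict_mono_repunit4: "strict_mono repunit4"
  unfolding strict_mono_Suc_iff by simp

lemma repunit4_less_iff [simp]: "repunit4 a < repunit4 b \<longleftrightarrow> a < b"
  using strict_mono_repunit4 strict_mono_less by blast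

lemma le_repunit4: "L \<le> repunit4 L"
  using strict_mono_repunit4 strict_mono_imp_increasing by blast

lemma spread_pow2_minus1: "spread (2 ^ k - 1) = repunit4 k"
proof (induction k)
  case (Suc k)
  have "1 \<le> (2::nat) ^ k" by simp
  then have "(2::nat) ^ Suc k - 1 = Suc (2 * (2 ^ k - 1))" unfolding power_Suc by linarith
  then show ?case using Suc.IH by (simp add: spread_mult2_Suc)
qed simp

lemma spread_le_repunit4:
  assumes "r < 2 ^ j"
  shows "spread r \<le> repunit4 j"
proof -
  have "r \<le> 2 ^ j - 1" using assms by simp
  then show ?thesis using spread_pow2_minus1[of j] by (metis spread_le_iff)
qed

definition U01 :: "nat set" where
  "U01 = range spread"

text \<open>The \<open>j\<close>-digit numbers with all base-4 digits in \<open>{1, 2}\<close> are \<open>11\<dots>1\<^sub>4 + spread r\<close>, \<open>r < 2^j\<close>.\<close>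

definition V12 :: "nat set" where
  "V12 = {repunit4 j + spread r | j r. r < 2 ^ j}"

definition repunit4_preds :: "nat set" where
  "repunit4_preds = {repunit4 L - d | L d. d \<in> {1, 2}}"

definition covering_set :: "nat set" where
  "covering_set = U01 \<union> V12 \<union> repunit4_preds"

lemma U01_append_digit: "x \<in> U01 \<Longrightarrow> b < 2 \<Longrightarrow> 4 * x + b \<in> U01"
  unfolding U01_def by (metis rangeE rangeI spread_digit)

lemma V12_append_digit:
  assumes "x \<in> V12" "1 \<le> b" "b \<le> 2"
  shows "4 * x + b \<in> V12"
proof -
  obtain j r where x: "x = repunit4 j + spread r" "r < 2 ^ j"
    using assms(1) unfolding V12_def by blast
  have "4 * x + b = repunit4 (Suc j) + spread (2 * r + (b - 1))"
    using x assms(2,3) spread_digit[of "b - 1" r] by simp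
  moreover have "2 * r + (b - 1) < 2 ^ Suc j" using x assms(3) by simp
  ultimately show ?thesis unfolding V12_def by blast
qed

lemma doubled_V12_eq_add_U01: "\<exists>v\<in>V12. \<exists>u\<in>U01. 2 * v = n + u \<and> u \<le> v"
proof (induction n rule: less_induct)
  case (less n)
  show ?case
  proof (cases "n = 0")
    case True
    have "0 \<in> U01" unfolding U01_def by (metis rangeI spread_0)
    moreover have "0 \<in> V12" unfolding V12_def by (auto intro!: exI[of _ 0])
    moreover have "2 * 0 = n + 0 \<and> (0::nat) \<le> 0" using True by simp
    ultimately show ?thesis by blast
  next
    case False
    define q where "q = (n - 1) div 4"
    define d where "d = (n - 1) mod 4 + 1"
    have n: "n = 4 * q + d" "d \<in> {1, 2, 3, 4}" using False unfolding q_def d_def by auto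
    then have "q < n" by auto
    then obtain v u where vu: "v \<in> V12" "u \<in> U01" "2 * v = q + u" "u \<le> v"
      using less by blast
    \<comment> \<open>the last base-4 digits \<open>b\<^sub>v \<in> {1, 2}\<close> of the new \<open>v\<close> and \<open>b\<^sub>u \<in> {0, 1}\<close> of the new \<open>u\<close>\<close>
    obtain bv bu :: nat where b: "1 \<le> bv" "bv \<le> 2" "bu < 2" "d + bu = 2 * bv"
    proof -
      from n(2) show ?thesis using that[of 1 1] that[of 1 0] that[of 2 1] that[of 2 0] by auto
    qed
    have "4 * v + bv \<in> V12" using vu(1) b by (intro V12_append_digit)
    moreover have "4 * u + bu \<in> U01" using vu(2) b by (intro U01_append_digit)
    moreover have "2 * (4 * v + bv) = n + (4 * u + bu)" using vu(3) n(1) b(4) by simp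
    moreover have "4 * u + bu \<le> 4 * v + bv" using vu(4) b by linarith
    ultimately show ?thesis by blast
  qed
qed

lemma repunit4_add_spread_eq_spread:
  "r < 2 ^ j \<Longrightarrow> repunit4 j + spread r = spread m \<Longrightarrow> spread m \<in> range repunit4"
proof (induction j arbitrary: r m)
  case 0
  then show ?case by (metis rangeI repunit4.simps(1) spread_0 add_0 less_one power_0)
next
  case (Suc j)
  define b where "b = r mod 2"
  define c where "c = m mod 2"
  have b: "b < 2" "spread r = 4 * spread (r div 2) + b"
    unfolding b_def using spread_digit[of "r mod 2" "r div 2"] by simp_all
  have c: "c < 2" "spread m = 4 * spread (m div 2) + c"
    unfolding c_def using spread_digit[of "m mod 2" "m div 2"] by simp_all
  have eq: "4 * (repunit4 j + spread (r div 2)) + (1 + b) = 4 * spread (m div 2) + c"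
    using Suc.prems(2) b c by simp
  \<comment> \<open>comparing last base-4 digits, \<open>1 + b = c\<close>\<close>
  then have "b = 0" "c = 1" using b(1) c(1) by presburger+
  with eq have "repunit4 j + spread (r div 2) = spread (m div 2)" by simp
  moreover have "r div 2 < 2 ^ j" using Suc.prems(1) by simp
  ultimately obtain L where "spread (m div 2) = repunit4 L" using Suc.IH by blast
  then have "spread m = repunit4 (Suc L)" using c \<open>c = 1\<close> by simp
  then show ?case by blast
qed

lemma U01_Int_V12: "U01 \<inter> V12 \<subseteq> range repunit4"
proof
  fix x
  assume "x \<in> U01 \<inter> V12"
  then obtain m j r where "x = spread m" "x = repunit4 j + spread r" "r < 2 ^ j"
    unfolding U01_def V12_def by blast
  then show "x \<in> range repunit4" using repunit4_add_spread_eq_spread by metis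
qed

theorem AP3_covering_covering_set: "AP3_covering covering_set"
  unfolding AP3_covering_def
proof (intro exI[of _ 1] allI impI)
  fix n :: nat
  assume "n > 1"
  obtain v u where vu: "v \<in> V12" "u \<in> U01" "2 * v = n + u" "u \<le> v"
    using doubled_V12_eq_add_U01 by blast
  show "\<exists>a1\<in>covering_set. \<exists>a2\<in>covering_set. a1 < a2 \<and> a2 < n \<and> a2 - a1 = n - a2"
  proof (cases "u < v")
    case True
    moreover have "v < n" "v - u = n - v" using vu True by auto
    moreover have "u \<in> covering_set" "v \<in> covering_set" using vu unfolding covering_set_def by auto
    ultimately show ?thesis by blast
  next
    case False
    then have "n \<in> U01 \<inter> V12" using vu by simp
    then obtain L where L: "n = repunit4 L" using U01_Int_V12 by blast
    have "repunit4 L - 2 \<in> covering_set" "repunit4 L - 1 \<in> covering_set"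
      unfolding covering_set_def repunit4_preds_def by blast+
    moreover have "repunit4 L - 2 < repunit4 L - 1" "repunit4 L - 1 < n"
      "(repunit4 L - 1) - (repunit4 L - 2) = n - (repunit4 L - 1)"
      using L \<open>n > 1\<close> by auto
    ultimately show ?thesis by blast
  qed
qed

lemma counting_mono: "A \<subseteq> B \<Longrightarrow> counting A x \<le> counting B x"
  unfolding counting_def by (rule card_mono) auto

lemma counting_Un_Int: "counting (A \<union> B) x + counting (A \<inter> B) x = counting A x + counting B x"
proof -
  have Un: "{a \<in> A \<union> B. a \<le> x} = {a \<in> A. a \<le> x} \<union> {a \<in> B. a \<le> x}"
    and Int: "{a \<in> A \<inter> B. a \<le> x} = {a \<in> A. a \<le> x} \<inter> {a \<in> B. a \<le> x}" by blast+
  have "finite {a \<in> A. a \<le> x}" "finite {a \<in> B. a \<le> x}" by simp_all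
  from card_Un_Int[OF this] show ?thesis unfolding counting_def Un Int by linarith
qed

lemma counting_Un_le: "counting (A \<union> B) x \<le> counting A x + counting B x"
  using counting_Un_Int[of A B x] by linarith

lemma strict_mono_bracket:
  fixes f :: "nat \<Rightarrow> nat"
  assumes "strict_mono f" "f 0 \<le> x"
  obtains k where "f k \<le> x" "x < f (Suc k)"
proof -
  define K where "K = {k. f k \<le> x}"
  have "K \<subseteq> {..x}"
    unfolding K_def using strict_mono_imp_increasing[OF assms(1)] le_trans by blast
  then have "finite K" by (rule finite_subset) simp
  moreover have "0 \<in> K" unfolding K_def using assms(2) by simp
  ultimately have "Max K \<in> K" using Max_in by blast
  moreover have "Suc (Max K) \<notin> K" using Max_ge[OF \<open>finite K\<close>] by fastforce
  ultimately show ?thesis using that unfolding K_def by simp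
qed

lemma power_four_eq_square: "(4::'a::comm_semiring_1) ^ k = (2 ^ k)\<^sup>2"
  by (simp add: power2_eq_square power_mult_distrib[symmetric])

lemma add_sqrt3_le_sqrt:
  fixes a t :: real
  assumes "0 \<le> a" "0 \<le> t" "3 * t \<le> a\<^sup>2"
  shows "a + sqrt (3 * t) \<le> sqrt (3 * a\<^sup>2 + 3 * t)"
proof (rule real_le_rsqrt)
  have "sqrt (3 * t) \<le> a" using assms real_sqrt_le_mono[of "3 * t" "a\<^sup>2"] by simp
  then have "2 * a * sqrt (3 * t) \<le> 2 * a\<^sup>2"
    using assms(1) by (simp add: power2_eq_square mult_left_mono)
  moreover have "(sqrt (3 * t))\<^sup>2 = 3 * t" using assms(2) by simp
  ultimately show "(a + sqrt (3 * t))\<^sup>2 \<le> 3 * a\<^sup>2 + 3 * t"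
    by (simp add: power2_sum)
qed

lemma two_add_sqrt3_le_sqrt:
  fixes a t :: real
  assumes "0 \<le> a" "0 \<le> t"
  shows "2 * a + sqrt (3 * t) \<le> sqrt (5 * a\<^sup>2 + 15 * t)"
proof (rule real_le_rsqrt)
  have "(sqrt (3 * t))\<^sup>2 = 3 * t" using assms(2) by simp
  moreover have "0 \<le> (a - 2 * sqrt (3 * t))\<^sup>2" by simp
  ultimately show "(2 * a + sqrt (3 * t))\<^sup>2 \<le> 5 * a\<^sup>2 + 15 * t"
    by (simp add: power2_sum power2_diff power_mult_distrib)
qed

lemma three_add_sqrt3_le_sqrt:
  fixes a t :: real
  assumes "0 \<le> a" "0 \<le> t" "3 * t \<le> a\<^sup>2"
  shows "3 * a + sqrt (3 * t) \<le> sqrt (15 * a\<^sup>2 + 15 * t)"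
proof (rule real_le_rsqrt)
  have "sqrt (3 * t) \<le> a" using assms real_sqrt_le_mono[of "3 * t" "a\<^sup>2"] by simp
  then have "6 * a * sqrt (3 * t) \<le> 6 * a\<^sup>2"
    using assms(1) by (simp add: power2_eq_square mult_left_mono)
  moreover have "(sqrt (3 * t))\<^sup>2 = 3 * t" using assms(2) by simp
  ultimately show "(3 * a + sqrt (3 * t))\<^sup>2 \<le> 15 * a\<^sup>2 + 15 * t"
    using assms(3) by (simp add: power2_sum power_mult_distrib)
qed

lemma finite_spread_le: "finite {m. spread m \<le> x}"
proof (rule finite_subset)
  show "{m. spread m \<le> x} \<subseteq> {..x}" using le_spread le_trans by blast
qed simp

lemma counting_U01: "counting U01 x = card {m. spread m \<le> x}"
proof -
  have "{u \<in> U01. u \<le> x} = spread ` {m. spread m \<le> x}" unfolding U01_def by auto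
  then show ?thesis unfolding counting_def using inj_spread by (simp add: card_image inj_on_def)
qed

lemma counting_U01_less_pow4:
  assumes "x < 4 ^ k"
  shows "counting U01 x \<le> 2 ^ k"
proof -
  have "{m. spread m \<le> x} \<subseteq> {..<2 ^ k}"
  proof
    fix m
    assume "m \<in> {m. spread m \<le> x}"
    then have "spread m < spread (2 ^ k)" using assms by (simp add: spread_pow2)
    then show "m \<in> {..<2 ^ k}" by simp
  qed
  then have "card {m. spread m \<le> x} \<le> card {..<(2::nat) ^ k}" by (intro card_mono) simp_all
  then show ?thesis unfolding counting_U01 by simp
qed

lemma counting_U01_le_pow4_add:
  assumes "x < 2 * 4 ^ k"
  shows "counting U01 x \<le> 2 ^ k + counting U01 (x - 4 ^ k)"
proof -
  let ?R = "{r. spread r \<le> x - 4 ^ k}"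
  have "{m. spread m \<le> x} \<subseteq> {..<2 ^ k} \<union> (\<lambda>r. 2 ^ k + r) ` ?R"
  proof
    fix m
    assume m: "m \<in> {m. spread m \<le> x}"
    show "m \<in> {..<2 ^ k} \<union> (\<lambda>r. 2 ^ k + r) ` ?R"
    proof (cases "m < 2 ^ k")
      case False
      have "spread m < spread (2 ^ Suc k)" using m assms spread_pow2[of "Suc k"] by simp
      then have r: "m - 2 ^ k < 2 ^ k" using False by simp
      then have "spread m = 4 ^ k + spread (m - 2 ^ k)"
        using spread_pow2_add[OF r] False by simp
      then have "m - 2 ^ k \<in> ?R" using m by simp
      moreover have "m = 2 ^ k + (m - 2 ^ k)" using False by simp
      ultimately show ?thesis by blast
    qed simp
  qed
  then have "card {m. spread m \<le> x} \<le> card ({..<2 ^ k} \<union> (\<lambda>r. 2 ^ k + r) ` ?R)"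
    using finite_spread_le by (intro card_mono) simp_all
  also have "\<dots> \<le> card {..<(2::nat) ^ k} + card ((\<lambda>r. 2 ^ k + r) ` ?R)"
    by (rule card_Un_le)
  also have "\<dots> \<le> 2 ^ k + card ?R"
    using card_image_le[OF finite_spread_le] by simp
  finally show ?thesis unfolding counting_U01 .
qed

lemma counting_U01_le_sqrt: "real (counting U01 x) \<le> sqrt (3 * real x) + 1"
proof (induction x rule: less_induct)
  case (less x)
  show ?case
  proof (cases "x = 0")
    case True
    then show ?thesis using counting_U01_less_pow4[of 0 0] by simp
  next
    case False
    then obtain k where k: "4 ^ k \<le> x" "x < 4 ^ Suc k"
      using ex_power_ivl1[of 4 x] by auto
    define y where "y = x - 4 ^ k"
    have x: "real x = (2 ^ k)\<^sup>2 + real y"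
      unfolding y_def using k(1) power_four_eq_square[of k, where 'a=real] by simp
    show ?thesis
    proof (cases "3 * y \<le> 4 ^ k")
      case True
      moreover have "(0::nat) < 4 ^ k" by simp
      ultimately have "x < 2 * 4 ^ k" using k(1) unfolding y_def by linarith
      then have "counting U01 x \<le> 2 ^ k + counting U01 y"
        using counting_U01_le_pow4_add unfolding y_def by blast
      then have "real (counting U01 x) \<le> real (2 ^ k) + real (counting U01 y)"
        by (metis of_nat_add of_nat_le_iff)
      also have "\<dots> \<le> real (2 ^ k) + sqrt (3 * real y) + 1"
        using less[of y] k(1) False unfolding y_def by simp
      also have "real (2 ^ k) + sqrt (3 * real y) \<le> sqrt (3 * real x)"
      proof -
        have "real (3 * y) \<le> real (4 ^ k)" using True by (simp only: of_nat_le_iff)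
        then have "3 * real y \<le> (2 ^ k)\<^sup>2" using power_four_eq_square[of k, where 'a=real] by simp
        then show ?thesis using add_sqrt3_le_sqrt[of "2 ^ k" "real y"] x
          by (simp add: algebra_simps)
      qed
      finally show ?thesis by simp
    next
      case False
      have "real (counting U01 x) \<le> real (2 ^ Suc k)"
        using counting_U01_less_pow4[OF k(2)] by (simp only: of_nat_le_iff)
      also have "\<dots> \<le> sqrt (3 * real x)"
      proof (rule real_le_rsqrt)
        have "4 * 4 ^ k \<le> 3 * x" using False k(1) unfolding y_def by linarith
        then have "real (4 * 4 ^ k) \<le> real (3 * x)" by (simp only: of_nat_le_iff)
        then show "(real (2 ^ Suc k))\<^sup>2 \<le> 3 * real x"
          using power_four_eq_square[of k, where 'a=real] by (simp add: power_mult_distrib)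
      qed
      finally show ?thesis by simp
    qed
  qed
qed

lemma V12_le_subset:
  assumes "x < repunit4 (Suc (Suc k))"
  shows "{v \<in> V12. v \<le> x} \<subseteq> (\<lambda>(j, r). repunit4 j + spread r) ` (SIGMA j:{0..<Suc k}. {..<2 ^ j})
    \<union> (\<lambda>r. repunit4 (Suc k) + spread r) ` {r. spread r \<le> x - repunit4 (Suc k)}"
proof
  fix v
  assume v: "v \<in> {v \<in> V12. v \<le> x}"
  then obtain j r where jr: "v = repunit4 j + spread r" "r < 2 ^ j"
    unfolding V12_def by blast
  moreover have "v \<le> x" using v by simp
  ultimately have "repunit4 j < repunit4 (Suc (Suc k))" using assms by linarith
  then have "j < Suc (Suc k)" by (simp only: repunit4_less_iff)
  then consider "j < Suc k" | "j = Suc k" by linarith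
  then show "v \<in> (\<lambda>(j, r). repunit4 j + spread r) ` (SIGMA j:{0..<Suc k}. {..<2 ^ j})
    \<union> (\<lambda>r. repunit4 (Suc k) + spread r) ` {r. spread r \<le> x - repunit4 (Suc k)}"
  proof cases
    case 1
    then show ?thesis using jr by force
  next
    case 2
    then have "spread r \<le> x - repunit4 (Suc k)" using jr(1) \<open>v \<le> x\<close> by simp
    then show ?thesis using jr 2 by blast
  qed
qed

lemma counting_V12_le:
  assumes "x < repunit4 (Suc (Suc k))"
  shows "counting V12 x + 1 \<le> 2 ^ Suc k + counting U01 (x - repunit4 (Suc k))"
proof -
  let ?I = "SIGMA j:{0..<Suc k}. {..<(2::nat) ^ j}"
  let ?R = "{r. spread r \<le> x - repunit4 (Suc k)}"
  define W1 where "W1 = (\<lambda>(j, r). repunit4 j + spread r) ` ?I"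
  define W2 where "W2 = (\<lambda>r. repunit4 (Suc k) + spread r) ` ?R"
  have "counting V12 x \<le> card (W1 \<union> W2)"
    using V12_le_subset[OF assms] finite_spread_le unfolding counting_def W1_def W2_def
    by (intro card_mono) simp_all
  also have "\<dots> \<le> card W1 + card W2" by (rule card_Un_le)
  finally have "counting V12 x \<le> card W1 + card W2" .
  moreover have "card W1 \<le> 2 ^ Suc k - 1"
    using card_image_le[of ?I "\<lambda>(j, r). repunit4 j + spread r"] sum_power2[of "Suc k"]
    unfolding W1_def by simp
  moreover have "card W2 \<le> card ?R" unfolding W2_def using finite_spread_le by (rule card_image_le)
  moreover have "(1::nat) \<le> 2 ^ Suc k" by simp
  ultimately show ?thesis unfolding counting_U01 by linarith
qed

lemma counting_U01_V12_le_sqrt_below_pow4: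
  assumes "repunit4 (Suc k) \<le> x" "x < 4 ^ Suc k"
  shows "real (counting U01 x) + real (counting V12 x) \<le> sqrt (15 * real x) + 3"
proof -
  define S where "S = repunit4 (Suc k)"
  define p :: nat where "p = 2 ^ Suc k"
  define z where "z = x - S"
  have S: "3 * S + 1 = p\<^sup>2"
    unfolding S_def p_def using three_repunit4[of "Suc k"] power_four_eq_square[of "Suc k", where 'a=nat] by simp
  have "repunit4 (Suc (Suc k)) = Suc (4 * S)" unfolding S_def by (rule repunit4.simps(2))
  then have "x < repunit4 (Suc (Suc k))" using assms(2) three_repunit4[of "Suc k"] S_def by linarith
  then have "counting V12 x + 1 \<le> p + counting U01 z"
    unfolding p_def z_def S_def by (rule counting_V12_le)
  moreover have "counting U01 x \<le> p" unfolding p_def by (rule counting_U01_less_pow4[OF assms(2)])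
  ultimately have "counting U01 x + counting V12 x + 1 \<le> 2 * p + counting U01 z" by linarith
  then have "real (counting U01 x + counting V12 x + 1) \<le> real (2 * p + counting U01 z)"
    by (simp only: of_nat_le_iff)
  then have "real (counting U01 x) + real (counting V12 x) \<le> 2 * real p + sqrt (3 * real z)"
    using counting_U01_le_sqrt[of z] by simp
  also have "\<dots> \<le> sqrt (5 * (real p)\<^sup>2 + 15 * real z)"
    by (rule two_add_sqrt3_le_sqrt) simp_all
  also have "5 * (real p)\<^sup>2 + 15 * real z = 15 * real x + 5"
  proof -
    have "5 * p\<^sup>2 + 15 * z = 15 * x + 5" using S assms(1) unfolding z_def S_def by linarith
    then have "real (5 * p\<^sup>2 + 15 * z) = real (15 * x + 5)" by (simp only:)
    then show ?thesis by simp
  qed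
  also have "sqrt (15 * real x + 5) \<le> sqrt (15 * real x) + sqrt 5"
    by (rule sqrt_add_le_add_sqrt) simp_all
  also have "sqrt 5 \<le> (3::real)" by (rule real_le_lsqrt) simp_all
  finally show ?thesis by simp
qed

lemma counting_U01_V12_le_sqrt_above_pow4:
  assumes "4 ^ Suc k \<le> x" "x < repunit4 (Suc (Suc k))"
  shows "real (counting U01 x) + real (counting V12 x) \<le> sqrt (15 * real x)"
proof -
  define S where "S = repunit4 (Suc k)"
  define p :: nat where "p = 2 ^ Suc k"
  define y where "y = x - 4 ^ Suc k"
  have p: "p\<^sup>2 = 4 ^ Suc k" unfolding p_def using power_four_eq_square[of "Suc k", where 'a=nat] by simp
  have S: "3 * S + 1 = p\<^sup>2" unfolding S_def p using three_repunit4[of "Suc k"] .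
  have x: "x < Suc (4 * S)" using assms(2) unfolding S_def by simp
  then have "x < 2 * 4 ^ Suc k" using S p by linarith
  then have "counting U01 x \<le> p + counting U01 y"
    unfolding p_def y_def by (rule counting_U01_le_pow4_add)
  moreover have "counting V12 x + 1 \<le> p + counting U01 (x - S)"
    unfolding p_def S_def using assms(2) by (rule counting_V12_le)
  moreover have "counting U01 (x - S) \<le> p"
    using x S p unfolding p_def by (intro counting_U01_less_pow4) linarith
  ultimately have "counting U01 x + counting V12 x + 1 \<le> 3 * p + counting U01 y" by linarith
  then have "real (counting U01 x + counting V12 x + 1) \<le> real (3 * p + counting U01 y)"
    by (simp only: of_nat_le_iff)
  then have "real (counting U01 x) + real (counting V12 x) \<le> 3 * real p + sqrt (3 * real y)"
    using counting_U01_le_sqrt[of y] by simp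
  also have "\<dots> \<le> sqrt (15 * (real p)\<^sup>2 + 15 * real y)"
  proof (rule three_add_sqrt3_le_sqrt)
    have "3 * y \<le> p\<^sup>2" using x S p unfolding y_def by linarith
    then have "real (3 * y) \<le> real (p\<^sup>2)" by (simp only: of_nat_le_iff)
    then show "3 * real y \<le> (real p)\<^sup>2" by simp
  qed simp_all
  also have "15 * (real p)\<^sup>2 + 15 * real y = 15 * real x"
  proof -
    have "15 * p\<^sup>2 + 15 * y = 15 * x" using p assms(1) unfolding y_def by linarith
    then have "real (15 * p\<^sup>2 + 15 * y) = real (15 * x)" by (simp only:)
    then show ?thesis by simp
  qed
  finally show ?thesis .
qed

lemma counting_U01_V12_le_sqrt:
  "real (counting U01 x) + real (counting V12 x) \<le> sqrt (15 * real x) + 3"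
proof -
  obtain L where L: "repunit4 L \<le> x" "x < repunit4 (Suc L)"
    using strict_mono_bracket[OF strict_mono_repunit4] by auto
  show ?thesis
  proof (cases L)
    case 0
    then have "x = 0" using L by simp
    have "counting U01 0 \<le> 1" using counting_U01_less_pow4[of 0 0] by simp
    moreover have "counting V12 0 + 1 \<le> 2 + counting U01 0" using counting_V12_le[of 0 0] by simp
    ultimately show ?thesis using \<open>x = 0\<close> by simp
  next
    case (Suc k)
    show ?thesis
    proof (cases "x < 4 ^ Suc k")
      case True
      then show ?thesis using L Suc counting_U01_V12_le_sqrt_below_pow4 by blast
    next
      case False
      then have "4 ^ Suc k \<le> x" by (simp only: not_less)
      moreover have "x < repunit4 (Suc (Suc k))" using L(2) Suc by (simp only:)
      ultimately show ?thesis using counting_U01_V12_le_sqrt_above_pow4[of k x] by linarith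
    qed
  qed
qed

lemma finite_repunit4_le: "finite {L. repunit4 L \<le> y}"
proof (rule finite_subset)
  show "{L. repunit4 L \<le> y} \<subseteq> {..y}" using le_repunit4 le_trans by blast
qed simp

lemma card_repunit4_le: "real (card {L. repunit4 L \<le> y}) \<le> log 4 (3 * real y + 1) + 1"
proof -
  define c where "c = log 4 (3 * real y + 1)"
  have "{L. repunit4 L \<le> y} \<subseteq> {..nat \<lfloor>c\<rfloor>}"
  proof
    fix L
    assume "L \<in> {L. repunit4 L \<le> y}"
    then have "4 ^ L \<le> 3 * y + 1" using three_repunit4[of L] by simp
    then have "real (4 ^ L) \<le> real (3 * y + 1)" by (simp only: of_nat_le_iff)
    then have "log 4 (4 ^ L) \<le> c" unfolding c_def by (intro log_mono) simp_all
    then have "real L \<le> c" by simp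
    then show "L \<in> {..nat \<lfloor>c\<rfloor>}" by (simp add: le_nat_floor)
  qed
  then have "card {L. repunit4 L \<le> y} \<le> Suc (nat \<lfloor>c\<rfloor>)"
    using card_mono[of "{..nat \<lfloor>c\<rfloor>}"] by simp
  moreover have "0 \<le> c" unfolding c_def by simp
  ultimately show ?thesis unfolding c_def[symmetric] by linarith
qed

lemma counting_repunit4_preds_le:
  "real (counting repunit4_preds x) \<le> 2 * log 4 (3 * real x + 7) + 2"
proof -
  define T where "T = {L. repunit4 L \<le> x + 2}"
  have fin: "finite T" unfolding T_def by (rule finite_repunit4_le)
  have "{a \<in> repunit4_preds. a \<le> x} \<subseteq> (\<lambda>L. repunit4 L - 1) ` T \<union> (\<lambda>L. repunit4 L - 2) ` T"
  proof
    fix a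
    assume "a \<in> {a \<in> repunit4_preds. a \<le> x}"
    then obtain L d where a: "a = repunit4 L - d" "d = 1 \<or> d = 2" "a \<le> x"
      unfolding repunit4_preds_def by blast
    then have "repunit4 L \<le> x + 2" by linarith
    then have "L \<in> T" unfolding T_def by simp
    with a show "a \<in> (\<lambda>L. repunit4 L - 1) ` T \<union> (\<lambda>L. repunit4 L - 2) ` T" by blast
  qed
  then have "counting repunit4_preds x \<le> card ((\<lambda>L. repunit4 L - 1) ` T \<union> (\<lambda>L. repunit4 L - 2) ` T)"
    unfolding counting_def using fin by (intro card_mono) simp_all
  also have "\<dots> \<le> card ((\<lambda>L. repunit4 L - 1) ` T) + card ((\<lambda>L. repunit4 L - 2) ` T)"
    by (rule card_Un_le)
  also have "\<dots> \<le> card T + card T" using card_image_le[OF fin] by (intro add_mono)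
  finally have "real (counting repunit4_preds x) \<le> 2 * real (card T)" by simp
  moreover have "real (card T) \<le> log 4 (3 * real x + 7) + 1"
    using card_repunit4_le[of "x + 2"] unfolding T_def by (simp add: algebra_simps)
  ultimately show ?thesis by linarith
qed

lemma counting_covering_set_le:
  "real (counting covering_set x) \<le> sqrt (15 * real x) + 5 + 2 * log 4 (3 * real x + 7)"
proof -
  have "counting covering_set x \<le> counting (U01 \<union> V12) x + counting repunit4_preds x"
    unfolding covering_set_def by (rule counting_Un_le)
  also have "\<dots> \<le> counting U01 x + counting V12 x + counting repunit4_preds x"
    using counting_Un_le[of U01 V12 x] by simp
  finally have "real (counting covering_set x)
      \<le> real (counting U01 x + counting V12 x + counting repunit4_preds x)"
    by (simp only: of_nat_le_iff)
  then show ?thesis using counting_U01_V12_le_sqrt[of x] counting_repunit4_preds_le[of x] by simp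
qed

lemma counting_V12_add_block:
  assumes "m \<le> 2 ^ Suc j" "2 * repunit4 j \<le> x" "\<And>r. r < m \<Longrightarrow> repunit4 (Suc j) + spread r \<le> x"
  shows "counting V12 (2 * repunit4 j) + m \<le> counting V12 x"
proof -
  let ?A = "{v \<in> V12. v \<le> 2 * repunit4 j}"
  define B where "B = (\<lambda>r. repunit4 (Suc j) + spread r) ` {..<m}"
  have "B \<subseteq> {v \<in> V12. v \<le> x}"
  proof
    fix v
    assume "v \<in> B"
    then obtain r where r: "v = repunit4 (Suc j) + spread r" "r < m" unfolding B_def by blast
    then have "v \<in> V12" unfolding V12_def using assms(1) by fastforce
    then show "v \<in> {v \<in> V12. v \<le> x}" using r assms(3) by simp
  qed
  moreover have "?A \<subseteq> {v \<in> V12. v \<le> x}" using assms(2) by auto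
  ultimately have "card (?A \<union> B) \<le> counting V12 x"
    unfolding counting_def by (intro card_mono) simp_all
  moreover have "?A \<inter> B = {}"
  proof -
    have "2 * repunit4 j < repunit4 (Suc j)" by simp
    then show ?thesis unfolding B_def by fastforce
  qed
  moreover have "card B = m"
    unfolding B_def using inj_spread by (simp add: card_image inj_on_def)
  moreover have "finite ?A" "finite B" unfolding B_def by simp_all
  ultimately show ?thesis unfolding counting_def using card_Un_disjoint by metis
qed

lemma counting_V12_double_repunit4: "2 ^ Suc j \<le> counting V12 (2 * repunit4 j) + 1"
proof (induction j)
  case 0
  have "0 \<in> V12" unfolding V12_def by (auto intro!: exI[of _ 0])
  then have "counting {0} 0 \<le> counting V12 0" by (intro counting_mono) simp
  then show ?case by (simp add: counting_def)
next
  case (Suc j)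
  have "counting V12 (2 * repunit4 j) + 2 ^ Suc j \<le> counting V12 (2 * repunit4 (Suc j))"
  proof (rule counting_V12_add_block)
    fix r :: nat
    assume "r < 2 ^ Suc j"
    then show "repunit4 (Suc j) + spread r \<le> 2 * repunit4 (Suc j)"
      using spread_le_repunit4[of r "Suc j"] by linarith
  qed simp_all
  then show ?case using Suc.IH by simp
qed

text \<open>\<open>peak k = 122\<dots>2\<^sub>4\<close> with \<open>k\<close> twos: all elements of \<open>V12\<close> with at most \<open>k\<close> digits, the
  \<open>2^k\<close> smallest ones with \<open>k + 1\<close> digits and the \<open>2^(k+1)\<close> smallest elements of \<open>U01\<close> lie below it.\<close>

definition peak :: "nat \<Rightarrow> nat" where
  "peak k = repunit4 (Suc k) + repunit4 k"

lemma three_peak: "3 * peak k + 2 = 5 * 4 ^ k"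
  unfolding peak_def using three_repunit4[of k] three_repunit4[of "Suc k"] by simp

lemma strict_mono_peak: "strict_mono peak"
  unfolding strict_mono_Suc_iff peak_def by simp

lemma counting_V12_peak: "3 * 2 ^ k \<le> counting V12 (peak k) + 1"
proof -
  have "counting V12 (2 * repunit4 k) + 2 ^ k \<le> counting V12 (peak k)"
  proof (rule counting_V12_add_block)
    fix r :: nat
    assume "r < 2 ^ k"
    then show "repunit4 (Suc k) + spread r \<le> peak k"
      unfolding peak_def using spread_le_repunit4[of r k] by linarith
  qed (simp_all add: peak_def)
  then show ?thesis using counting_V12_double_repunit4[of k] by simp
qed

lemma counting_U01_peak: "2 ^ Suc k \<le> counting U01 (peak k)"
proof -
  have "{..<2 ^ Suc k} \<subseteq> {m. spread m \<le> peak k}"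
  proof
    fix m :: nat
    assume "m \<in> {..<2 ^ Suc k}"
    then have "m < 2 ^ Suc k" by (simp only: lessThan_iff)
    then have "spread m \<le> repunit4 (Suc k)" by (rule spread_le_repunit4)
    then show "m \<in> {m. spread m \<le> peak k}" unfolding peak_def by simp
  qed
  then have "card {..<(2::nat) ^ Suc k} \<le> card {m. spread m \<le> peak k}"
    using finite_spread_le by (rule card_mono[rotated])
  then show ?thesis unfolding counting_U01 by simp
qed

lemma counting_U01_Int_V12_peak: "counting (U01 \<inter> V12) (peak k) \<le> k + 2"
proof -
  have "{a \<in> U01 \<inter> V12. a \<le> peak k} \<subseteq> repunit4 ` {..Suc k}"
  proof
    fix a
    assume a: "a \<in> {a \<in> U01 \<inter> V12. a \<le> peak k}"
    then obtain L where L: "a = repunit4 L" using U01_Int_V12 by blast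
    have "repunit4 L < repunit4 (Suc (Suc k))" using a L unfolding peak_def by simp
    then have "L \<le> Suc k" by (simp only: repunit4_less_iff less_Suc_eq_le)
    then show "a \<in> repunit4 ` {..Suc k}" using L by simp
  qed
  then have "counting (U01 \<inter> V12) (peak k) \<le> card (repunit4 ` {..Suc k})"
    unfolding counting_def by (rule card_mono[rotated]) simp
  also have "\<dots> \<le> k + 2" using card_image_le[of "{..Suc k}" repunit4] by simp
  finally show ?thesis .
qed

lemma counting_covering_set_peak: "5 * 2 ^ k \<le> counting covering_set (peak k) + k + 3"
proof -
  have "counting (U01 \<union> V12) (peak k) \<le> counting covering_set (peak k)"
    unfolding covering_set_def by (rule counting_mono) blast
  then show ?thesis
    using counting_Un_Int[of U01 V12 "peak k"] counting_U01_peak[of k] counting_V12_peak[of k]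
      counting_U01_Int_V12_peak[of k]
    by simp
qed

lemma limsup_counting_covering_set_le:
  "limsup (\<lambda>n. ereal (real (counting covering_set n) / sqrt (real n))) \<le> ereal (sqrt 15)"
proof -
  define e where "e n = (5 + 2 * log 4 (3 * real n + 7)) / sqrt (real n)" for n :: nat
  have bound: "real (counting covering_set n) / sqrt (real n) \<le> sqrt 15 + e n" if "1 \<le> n" for n
  proof -
    have "0 < sqrt (real n)" using that by simp
    moreover have "real (counting covering_set n)
        \<le> sqrt 15 * sqrt (real n) + (5 + 2 * log 4 (3 * real n + 7))"
      using counting_covering_set_le[of n] by (simp add: real_sqrt_mult)
    ultimately show ?thesis unfolding e_def by (simp add: field_simps)
  qed
  have "\<forall>\<^sub>F n in sequentially.
      ereal (real (counting covering_set n) / sqrt (real n)) \<le> ereal (sqrt 15 + e n)"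
    using eventually_ge_at_top[of 1] by eventually_elim (simp add: bound)
  then have "limsup (\<lambda>n. ereal (real (counting covering_set n) / sqrt (real n)))
      \<le> limsup (\<lambda>n. ereal (sqrt 15 + e n))"
    by (rule Limsup_mono)
  also have "\<dots> = ereal (sqrt 15)"
  proof (rule lim_imp_Limsup)
    have "e \<longlonglongrightarrow> 0" unfolding e_def by real_asymp
    then show "(\<lambda>n. ereal (sqrt 15 + e n)) \<longlonglongrightarrow> ereal (sqrt 15)"
      using tendsto_add[OF tendsto_const, of e 0 sequentially "sqrt 15"] by (simp add: tendsto_ereal)
  qed simp
  finally show ?thesis .
qed

lemma limsup_counting_covering_set_ge:
  "ereal (sqrt 15) \<le> limsup (\<lambda>n. ereal (real (counting covering_set n) / sqrt (real n)))"
proof -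
  define f where "f n = ereal (real (counting covering_set n) / sqrt (real n))" for n
  define g where "g k = (5 * 2 ^ k - real k - 3) / sqrt ((5 * (2 ^ k)\<^sup>2 - 2) / 3)" for k :: nat
  have sqrt_75: "sqrt 75 = 5 * sqrt (3::real)"
    using real_sqrt_mult[of "5\<^sup>2" 3] by simp
  have "g \<longlonglongrightarrow> sqrt 15"
    unfolding g_def
    by real_asymp (simp add: powr_half_sqrt flip: sqrt_def,
        simp add: real_sqrt_divide field_simps sqrt_75 flip: real_sqrt_mult)
  then have "ereal (sqrt 15) = limsup (\<lambda>k. ereal (g k))"
    by (intro lim_imp_Limsup[symmetric]) (simp_all add: tendsto_ereal)
  also have "\<dots> \<le> limsup (f \<circ> peak)"
  proof (intro Limsup_mono always_eventually allI)
    fix k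
    have "real (3 * peak k + 2) = real (5 * 4 ^ k)" using three_peak[of k] by (simp only:)
    then have N: "(5 * (2 ^ k)\<^sup>2 - 2) / 3 = real (peak k)"
      using power_four_eq_square[of k, where 'a=real] by simp
    have "real (5 * 2 ^ k) \<le> real (counting covering_set (peak k) + k + 3)"
      using counting_covering_set_peak[of k] by (simp only: of_nat_le_iff)
    then have "5 * 2 ^ k - real k - 3 \<le> real (counting covering_set (peak k))" by simp
    then have "g k \<le> real (counting covering_set (peak k)) / sqrt (real (peak k))"
      unfolding g_def N by (rule divide_right_mono) simp
    then show "ereal (g k) \<le> (f \<circ> peak) k" unfolding f_def by simp
  qed
  also have "\<dots> \<le> limsup f" by (rule limsup_subseq_mono[OF strict_mono_peak])
  finally show ?thesis unfolding f_def .
qed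

theorem theorem1:
  shows "\<exists>A :: nat set. AP3_covering A \<and>
     limsup (\<lambda>n. ereal (real (counting A n) / sqrt (real n))) = ereal (sqrt 15)"
  using AP3_covering_covering_set limsup_counting_covering_set_le limsup_counting_covering_set_ge
  by (intro exI[of _ covering_set]) (simp add: antisym)

end
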